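(* Let $G$ be a (possibly empty) complete multipartite graph all of whose partite sets have even size, and let $q_1,q_2,q_3,q_4\ge 0$ be integers. Let $\gamma$ be the complete multipartite graph $G+K_{q_1,q_2,q_3,q_4}$. Suppose one of the following holds: (1) all $q_i=0$; (2) one $q_i$ is odd and all other $q_i=0$; (3) two of the $q_i$ equal $1$, one $q_i=0$, and the remaining $q_i$ is either odd or $0$; (4) all $q_i=1$. Then $\gamma$ is achirally embeddable in $S^3$.
   Context: A graph is achirally embeddable in $S^3$ if it has an embedding $\Gamma$ in $S^3$ for which there is an orientation-reversing homeomorphism $h$ of $S^3$ with $h(\Gamma)=\Gamma$. The join $A+B$ of graphs $A$ and $B$ is $A\cup B$ together with edges joining every vertex of $A$ to every vertex of $B$. The partite sets of a complete multipartite graph are its maximal independent classes of vertices; the size of a partite set is its number of vertices. A value $q_i=0$ means that partite set is absent. *)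

theory Defs
  imports "HOL-Homology.Homology"
begin

text \<open>The 3-sphere: the library's nsphere 3, the unit sphere in R^4 realised on
  functions nat => real vanishing beyond index 3.\<close>

abbreviation S3 :: "(nat \<Rightarrow> real) topology" where
  "S3 \<equiv> nsphere 3"

text \<open>A finite simple graph is given by a vertex set V and a set E of 2-element
  subsets of V.\<close>

definition graph_embedding_S3 ::
  "'v set \<Rightarrow> 'v set set \<Rightarrow> ('v \<Rightarrow> nat \<Rightarrow> real) \<Rightarrow> ('v set \<Rightarrow> real \<Rightarrow> nat \<Rightarrow> real) \<Rightarrow> bool"
  where
  "graph_embedding_S3 V E pos c \<longleftrightarrow>
     inj_on pos V \<and> pos ` V \<subseteq> topspace S3 \<and>
     (\<forall>e\<in>E. continuous_map (top_of_set {0..1}) S3 (c e) \<and>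
             inj_on (c e) {0..1} \<and> c e ` {0, 1} = pos ` e \<and>
             c e ` {0<..<1} \<inter> pos ` V = {}) \<and>
     (\<forall>e\<in>E. \<forall>e'\<in>E. e \<noteq> e' \<longrightarrow> c e ` {0<..<1} \<inter> c e' ` {0<..<1} = {})"

definition graph_image_S3 ::
  "'v set \<Rightarrow> 'v set set \<Rightarrow> ('v \<Rightarrow> nat \<Rightarrow> real) \<Rightarrow> ('v set \<Rightarrow> real \<Rightarrow> nat \<Rightarrow> real) \<Rightarrow> (nat \<Rightarrow> real) set"
  where
  "graph_image_S3 V E pos c = pos ` V \<union> (\<Union>e\<in>E. c e ` {0..1})"

definition orientation_reversing_S3 :: "((nat \<Rightarrow> real) \<Rightarrow> nat \<Rightarrow> real) \<Rightarrow> bool" where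
  "orientation_reversing_S3 h \<longleftrightarrow> homeomorphic_map S3 S3 h \<and> Brouwer_degree2 3 h = -1"

definition achirally_embeddable :: "'v set \<Rightarrow> 'v set set \<Rightarrow> bool" where
  "achirally_embeddable V E \<longleftrightarrow>
     (\<exists>pos c h. graph_embedding_S3 V E pos c \<and> orientation_reversing_S3 h \<and>
               h ` graph_image_S3 V E pos c = graph_image_S3 V E pos c)"

text \<open>The complete multipartite graph with partite sets of sizes ps!0, ps!1, ...
  Vertex (i,j) is the j-th vertex of the i-th partite set; parts of size 0 are absent.\<close>

definition cm_vertices :: "nat list \<Rightarrow> (nat \<times> nat) set" where
  "cm_vertices ps = {(i, j). i < length ps \<and> j < ps ! i}"

definition cm_edges :: "nat list \<Rightarrow> (nat \<times> nat) set set" where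
  "cm_edges ps = {{x, y} | x y. x \<in> cm_vertices ps \<and> y \<in> cm_vertices ps \<and> fst x \<noteq> fst y}"

definition q_condition :: "nat \<Rightarrow> nat \<Rightarrow> nat \<Rightarrow> nat \<Rightarrow> bool" where
  "q_condition q1 q2 q3 q4 \<longleftrightarrow>
    (let q = [q1, q2, q3, q4] in
       (\<forall>i<4. q ! i = 0)
     \<or> (\<exists>i<4. odd (q ! i) \<and> (\<forall>j<4. j \<noteq> i \<longrightarrow> q ! j = 0))
     \<or> (\<exists>i j k l. {i, j, k, l} = {0, 1, 2, 3} \<and>
           q ! i = 1 \<and> q ! j = 1 \<and> q ! k = 0 \<and> (odd (q ! l) \<or> q ! l = 0))
     \<or> (\<forall>i<4. q ! i = 1))"

end

theory Submission
  imports Defs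
begin

text \<open>Place the vertices on the great circle \<open>x\<^sub>2 = x\<^sub>3 = 0\<close> of \<open>S\<^sup>3\<close>, the binding of
  the open book whose pages are the great half-spheres bounded by it.  The map
  \<open>(x\<^sub>0, x\<^sub>1, x\<^sub>2, x\<^sub>3) \<mapsto> (-x\<^sub>0, x\<^sub>1, -x\<^sub>2, -x\<^sub>3)\<close> reverses orientation,
  reflects the binding and sends every page to the opposite one.  If the angle \<open>a v\<close> of each
  vertex satisfies \<open>a (\<sigma> v) = - a v\<close> for a graph involution \<open>\<sigma>\<close>, every edge \<open>e\<close> other
  than those of the form \<open>{u, \<sigma> u}\<close> is drawn in a page of its own, with \<open>\<sigma> e\<close> in the
  opposite page, and the spatial graph is invariant.  An edge \<open>{u, \<sigma> u}\<close> is mapped to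
  itself and has to run along the binding; this is possible for the innermost pair (around
  angle \<open>0\<close>) and the outermost pair (around angle \<open>pi\<close>).

  For \<open>G + K\<^sub>q\<^sub>1\<^sub>,\<^sub>q\<^sub>2\<^sub>,\<^sub>q\<^sub>3\<^sub>,\<^sub>q\<^sub>4\<close>, \<open>\<sigma>\<close> swaps the vertices \<open>2k\<close> and \<open>2k + 1\<close>
  inside each part, so at most one vertex (in the only odd part) is fixed and gets angle \<open>0\<close>;
  the hypotheses on the \<open>q\<^sub>i\<close> leave at most two pairs of singleton parts, which \<open>\<sigma>\<close>
  exchanges and which are placed outermost and innermost.\<close>

text \<open>The point at angle \<open>\<phi>\<close> of the binding circle, pushed by \<open>\<psi>\<close> into the page at
  angle \<open>\<theta>\<close>.\<close>

definition book_point :: "real \<Rightarrow> real \<Rightarrow> real \<Rightarrow> nat \<Rightarrow> real" where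
  "book_point \<phi> \<psi> \<theta> = (\<lambda>i. if i = 0 then cos \<psi> * sin \<phi> else if i = 1 then cos \<psi> * cos \<phi>
     else if i = 2 then sin \<psi> * cos \<theta> else if i = 3 then sin \<psi> * sin \<theta> else 0)"

lemma book_point_in_S3: "book_point \<phi> \<psi> \<theta> \<in> topspace S3"
proof -
  have "(\<Sum>i\<le>3. (book_point \<phi> \<psi> \<theta> i)\<^sup>2)
      = (cos \<psi>)\<^sup>2 * ((sin \<phi>)\<^sup>2 + (cos \<phi>)\<^sup>2) + (sin \<psi>)\<^sup>2 * ((cos \<theta>)\<^sup>2 + (sin \<theta>)\<^sup>2)"
    unfolding distrib_left add.assoc[symmetric]
    by (simp add: book_point_def numeral_3_eq_3 power_mult_distrib)
  also have "\<dots> = 1"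
    by simp
  finally show ?thesis
    by (simp add: nsphere book_point_def)
qed

lemma sin_cos_eq_imp_eq:
  fixes x y :: real
  assumes "sin x = sin y" "cos x = cos y" "\<bar>x - y\<bar> < 2 * pi"
  shows "x = y"
proof -
  obtain n :: int where n: "x = y + 2 * pi * n"
    using assms(1,2) sin_cos_eq_iff by blast
  with assms(3) have "\<bar>real_of_int n\<bar> < 1"
    by (simp add: abs_mult)
  then show ?thesis
    using n by simp
qed

lemma book_point_eqI:
  assumes "sin \<phi> = sin \<phi>'" "cos \<phi> = cos \<phi>'" "sin \<theta> = sin \<theta>'" "cos \<theta> = cos \<theta>'"
  shows "book_point \<phi> \<psi> \<theta> = book_point \<phi>' \<psi> \<theta>'"
  using assms by (simp add: book_point_def fun_eq_iff)

lemma book_point_binding: "book_point \<phi> 0 \<theta> = book_point \<phi> 0 \<theta>'"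
  by (simp add: book_point_def fun_eq_iff)

lemma book_point_eqD:
  assumes eq: "book_point \<phi> \<psi> \<theta> = book_point \<phi>' \<psi>' \<theta>'"
    and \<psi>: "0 \<le> \<psi>" "\<psi> < pi / 2" and \<psi>': "0 \<le> \<psi>'" "\<psi>' < pi / 2"
  shows "\<psi> = \<psi>' \<and> sin \<phi> = sin \<phi>' \<and> cos \<phi> = cos \<phi>'
    \<and> (\<psi> \<noteq> 0 \<longrightarrow> sin \<theta> = sin \<theta>' \<and> cos \<theta> = cos \<theta>')"
proof -
  have c0: "cos \<psi> * sin \<phi> = cos \<psi>' * sin \<phi>'" and c1: "cos \<psi> * cos \<phi> = cos \<psi>' * cos \<phi>'"
    and c2: "sin \<psi> * cos \<theta> = sin \<psi>' * cos \<theta>'" and c3: "sin \<psi> * sin \<theta> = sin \<psi>' * sin \<theta>'"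
    using fun_cong[OF eq, of 0] fun_cong[OF eq, of 1] fun_cong[OF eq, of 2] fun_cong[OF eq, of 3]
    by (simp_all add: book_point_def)
  have pos: "cos \<psi> > 0" "cos \<psi>' > 0"
    using \<psi> \<psi>' by (simp_all add: cos_gt_zero_pi)
  have norm: "(cos x * sin y)\<^sup>2 + (cos x * cos y)\<^sup>2 = (cos x)\<^sup>2" for x y :: real
    by (simp add: power_mult_distrib flip: distrib_left)
  have "(cos \<psi>)\<^sup>2 = (cos \<psi>')\<^sup>2"
    by (metis c0 c1 norm)
  with pos have "cos \<psi> = cos \<psi>'"
    by (simp add: power2_eq_iff_nonneg)
  moreover have "\<psi> \<le> pi" "\<psi>' \<le> pi"
    using \<psi> \<psi>' by linarith+
  ultimately have same: "\<psi> = \<psi>'"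
    using \<psi>(1) \<psi>'(1) cos_inj_pi by blast
  have "sin \<phi> = sin \<phi>'" "cos \<phi> = cos \<phi>'"
    using c0 c1 pos(1) unfolding same by simp_all
  moreover have "sin \<theta> = sin \<theta>' \<and> cos \<theta> = cos \<theta>'" if "\<psi> \<noteq> 0"
  proof -
    have "sin \<psi> \<noteq> 0"
      using \<psi> that by (simp add: sin_zero_pi_iff)
    then show ?thesis
      using c2 c3 unfolding same by simp
  qed
  ultimately show ?thesis
    using same by blast
qed

lemma book_point_page_ne_binding:
  assumes "0 < \<psi>" "\<psi> < pi / 2"
  shows "book_point \<phi> \<psi> \<theta> \<noteq> book_point \<phi>' 0 \<theta>'"
  using assms book_point_eqD[of \<phi> \<psi> \<theta> \<phi>' 0 \<theta>'] by auto

text \<open>For \<open>h = 0\<close> the arc runs along the binding, for \<open>h > 0\<close> its interior lies in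
  page \<open>\<theta>\<close>.\<close>

definition book_arc :: "real \<Rightarrow> real \<Rightarrow> real \<Rightarrow> real \<Rightarrow> real \<Rightarrow> nat \<Rightarrow> real" where
  "book_arc h \<theta> \<alpha> \<beta> t = book_point (\<alpha> + t * (\<beta> - \<alpha>)) (h * (t * (1 - t))) \<theta>"

lemma continuous_map_book_arc: "continuous_map (top_of_set {0..1}) S3 (book_arc h \<theta> \<alpha> \<beta>)"
proof -
  have "continuous_map (top_of_set {0..1}) euclideanreal (\<lambda>t. book_arc h \<theta> \<alpha> \<beta> t i)" for i
    unfolding book_arc_def book_point_def continuous_map_iff_continuous
    by (cases "i = 0"; cases "i = 1"; cases "i = 2"; cases "i = 3") (auto intro!: continuous_intros)
  then have "continuous_map (top_of_set {0..1}) (powertop_real UNIV) (book_arc h \<theta> \<alpha> \<beta>)"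
    by (simp add: continuous_map_componentwise_UNIV)
  moreover have "book_arc h \<theta> \<alpha> \<beta> t \<in> topspace S3" for t
    unfolding book_arc_def by (rule book_point_in_S3)
  ultimately show ?thesis
    by (simp add: nsphere continuous_map_in_subtopology image_subset_iff)
qed

lemma book_arc_ends: "book_arc h \<theta> \<alpha> \<beta> 0 = book_point \<alpha> 0 0" "book_arc h \<theta> \<alpha> \<beta> 1 = book_point \<beta> 0 0"
  by (simp_all add: book_arc_def book_point_binding[of _ \<theta> 0])

lemma book_arc_binding: "book_arc 0 \<theta> = book_arc 0 \<theta>'"
  by (simp add: fun_eq_iff book_arc_def book_point_binding[of _ \<theta> \<theta>'])

lemma book_arc_page_cong:
  assumes "sin \<theta> = sin \<theta>'" "cos \<theta> = cos \<theta>'"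
  shows "book_arc h \<theta> = book_arc h \<theta>'"
  using book_point_eqI[OF refl refl assms] by (simp add: fun_eq_iff book_arc_def)

lemma book_arc_shift_2pi: "book_arc h \<theta> (\<alpha> + 2 * pi) (\<beta> + 2 * pi) = book_arc h \<theta> \<alpha> \<beta>"
proof -
  have shift: "\<alpha> + 2 * pi + t * (\<beta> + 2 * pi - (\<alpha> + 2 * pi)) = (\<alpha> + t * (\<beta> - \<alpha>)) + 2 * pi" for t
    by (simp add: algebra_simps)
  have periodic: "book_point (\<phi> + 2 * pi) \<psi> \<theta> = book_point \<phi> \<psi> \<theta>" for \<phi> \<psi>
    by (rule book_point_eqI) simp_all
  show ?thesis
    unfolding book_arc_def shift periodic ..
qed

lemma book_arc_height_bounds:
  assumes "0 \<le> h" "h \<le> 1" "t \<in> {0..1}"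
  shows "0 \<le> h * (t * (1 - t))" "h * (t * (1 - t)) < pi / 2"
proof -
  show "0 \<le> h * (t * (1 - t))"
    using assms by simp
  have "t * (1 - t) \<le> 1 / 4"
    using zero_le_power2[of "t - 1 / 2"] by (simp add: power2_eq_square algebra_simps)
  then have "h * (t * (1 - t)) \<le> 1 * (1 / 4)"
    using assms by (intro mult_mono) auto
  then show "h * (t * (1 - t)) < pi / 2"
    using pi_ge_two by linarith
qed

lemma inj_on_book_arc:
  assumes "\<alpha> \<noteq> \<beta>" "\<bar>\<beta> - \<alpha>\<bar> < 2 * pi" "0 \<le> h" "h \<le> 1"
  shows "inj_on (book_arc h \<theta> \<alpha> \<beta>) {0..1}"
proof
  fix t s :: real
  assume t: "t \<in> {0..1}" and s: "s \<in> {0..1}" and eq: "book_arc h \<theta> \<alpha> \<beta> t = book_arc h \<theta> \<alpha> \<beta> s"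
  from book_point_eqD[OF eq[unfolded book_arc_def] book_arc_height_bounds[OF assms(3,4) t]
      book_arc_height_bounds[OF assms(3,4) s]]
  have "sin (\<alpha> + t * (\<beta> - \<alpha>)) = sin (\<alpha> + s * (\<beta> - \<alpha>))"
    "cos (\<alpha> + t * (\<beta> - \<alpha>)) = cos (\<alpha> + s * (\<beta> - \<alpha>))"
    by auto
  moreover have "\<bar>(\<alpha> + t * (\<beta> - \<alpha>)) - (\<alpha> + s * (\<beta> - \<alpha>))\<bar> < 2 * pi"
  proof -
    have "\<bar>(\<alpha> + t * (\<beta> - \<alpha>)) - (\<alpha> + s * (\<beta> - \<alpha>))\<bar> = \<bar>t - s\<bar> * \<bar>\<beta> - \<alpha>\<bar>"
      by (simp add: abs_mult flip: left_diff_distrib)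
    also have "\<dots> \<le> \<bar>\<beta> - \<alpha>\<bar>"
      using t s by (intro mult_left_le_one_le) auto
    finally show ?thesis
      using assms(2) by simp
  qed
  ultimately have "\<alpha> + t * (\<beta> - \<alpha>) = \<alpha> + s * (\<beta> - \<alpha>)"
    by (rule sin_cos_eq_imp_eq)
  then show "t = s"
    using assms(1) by simp
qed

definition coord_reflection :: "nat \<Rightarrow> (nat \<Rightarrow> real) \<Rightarrow> nat \<Rightarrow> real" where
  "coord_reflection k x = (\<lambda>i. if i = k then - x i else x i)"

definition coord_swap :: "nat \<Rightarrow> (nat \<Rightarrow> real) \<Rightarrow> nat \<Rightarrow> real" where
  "coord_swap k x = (\<lambda>i. if i = 0 then x k else if i = k then x 0 else x i)"

lemma continuous_map_coord_reflection: "continuous_map (nsphere n) (nsphere n) (coord_reflection k)"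
  unfolding coord_reflection_def by (rule continuous_map_nsphere_reflection)

lemma continuous_map_coord_swap:
  assumes "k \<le> n"
  shows "continuous_map (nsphere n) (nsphere n) (coord_swap k)"
proof -
  define t where "t = (\<lambda>i::nat. if i = 0 then k else if i = k then 0 else i)"
  have "bij_betw t {..n} {..n}"
    unfolding bij_betw_def inj_on_def t_def using assms by (auto simp: image_def split: if_splits)
  moreover have "coord_swap k x = x \<circ> t" for x
    by (auto simp: coord_swap_def t_def fun_eq_iff)
  ultimately have sum_sq: "(\<Sum>i\<le>n. (coord_swap k x i)\<^sup>2) = (\<Sum>i\<le>n. (x i)\<^sup>2)" for x
    using sum.reindex_bij_betw[of t "{..n}" "{..n}" "\<lambda>i. (x i)\<^sup>2"] by simp
  have "continuous_map (powertop_real UNIV) euclideanreal (\<lambda>x. coord_swap k x j)" for j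
    unfolding coord_swap_def by (auto intro: continuous_map_product_projection)
  then have "continuous_map (powertop_real UNIV) (powertop_real UNIV) (coord_swap k)"
    by (simp add: continuous_map_componentwise_UNIV)
  moreover have "coord_swap k x \<in> topspace (nsphere n)" if "x \<in> topspace (nsphere n)" for x
    using that assms sum_sq by (auto simp: nsphere coord_swap_def)
  ultimately show ?thesis
    by (simp add: nsphere continuous_map_in_subtopology continuous_map_from_subtopology image_subset_iff)
qed

lemma Brouwer_degree2_coord_reflection:
  assumes "k \<le> n"
  shows "Brouwer_degree2 n (coord_reflection k) = -1"
proof -
  have refl0: "Brouwer_degree2 n (coord_reflection 0) = -1"
    unfolding coord_reflection_def by (rule Brouwer_degree2_reflection)
  show ?thesis
  proof (cases "k = 0")
    case False
    note swap = continuous_map_coord_swap[OF assms] and refl = continuous_map_coord_reflection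
    have "homeomorphic_map (nsphere n) (nsphere n) (coord_swap k)"
      by (rule homeomorphic_map_involution[OF swap]) (simp add: coord_swap_def fun_eq_iff False)
    then have swap_deg: "\<bar>Brouwer_degree2 n (coord_swap k)\<bar> = 1"
      by (rule Brouwer_degree2_homeomorphic_map)
    have "coord_reflection k = coord_swap k \<circ> (coord_reflection 0 \<circ> coord_swap k)"
      using False by (auto simp: coord_swap_def coord_reflection_def fun_eq_iff)
    then have "Brouwer_degree2 n (coord_reflection k)
        = Brouwer_degree2 n (coord_swap k) * (Brouwer_degree2 n (coord_reflection 0) * Brouwer_degree2 n (coord_swap k))"
      using swap refl by (simp add: Brouwer_degree2_compose continuous_map_compose)
    also have "\<dots> = - (Brouwer_degree2 n (coord_swap k))\<^sup>2"
      using refl0 by (simp add: power2_eq_square)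
    also have "\<dots> = -1"
      using swap_deg by (simp add: abs_square_eq_1)
    finally show ?thesis .
  qed (use refl0 in simp)
qed

definition book_flip :: "(nat \<Rightarrow> real) \<Rightarrow> nat \<Rightarrow> real" where
  "book_flip = coord_reflection 0 \<circ> coord_reflection 2 \<circ> coord_reflection 3"

lemma book_flip_book_flip [simp]: "book_flip (book_flip x) = x"
  by (simp add: book_flip_def coord_reflection_def fun_eq_iff)

lemma orientation_reversing_book_flip: "orientation_reversing_S3 book_flip"
proof -
  note refl = continuous_map_coord_reflection[of 3]
  have "continuous_map S3 S3 book_flip"
    unfolding book_flip_def by (intro continuous_map_compose[where X'=S3] refl)
  then have "homeomorphic_map S3 S3 book_flip"
    by (rule homeomorphic_map_involution) simp
  moreover have "Brouwer_degree2 3 book_flip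
      = Brouwer_degree2 3 (coord_reflection 0) * (Brouwer_degree2 3 (coord_reflection 2) * Brouwer_degree2 3 (coord_reflection 3))"
    unfolding book_flip_def o_assoc[symmetric]
    by (simp add: Brouwer_degree2_compose[OF continuous_map_compose[OF refl refl] refl]
        Brouwer_degree2_compose[OF refl refl])
  ultimately show ?thesis
    unfolding orientation_reversing_S3_def by (simp add: Brouwer_degree2_coord_reflection)
qed

lemma book_flip_book_point: "book_flip (book_point \<phi> \<psi> \<theta>) = book_point (- \<phi>) \<psi> (\<theta> + pi)"
  by (simp add: book_flip_def coord_reflection_def book_point_def fun_eq_iff)

lemma book_flip_book_arc: "book_flip (book_arc h \<theta> \<alpha> \<beta> t) = book_arc h (\<theta> + pi) (- \<beta>) (- \<alpha>) (1 - t)"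
  unfolding book_arc_def book_flip_book_point by (simp add: algebra_simps)

lemma achirally_embeddableI:
  assumes "graph_embedding_S3 V E pos c" and "orientation_reversing_S3 h"
    and "\<And>x. h (h x) = x" and "h ` graph_image_S3 V E pos c \<subseteq> graph_image_S3 V E pos c"
  shows "achirally_embeddable V E"
proof -
  have "x \<in> h ` graph_image_S3 V E pos c" if "x \<in> graph_image_S3 V E pos c" for x
  proof
    show "x = h (h x)"
      by (simp add: assms(3))
    show "h x \<in> graph_image_S3 V E pos c"
      using assms(4) that by blast
  qed
  then have "h ` graph_image_S3 V E pos c = graph_image_S3 V E pos c"
    using assms(4) by blast
  then show ?thesis
    unfolding achirally_embeddable_def using assms(1,2) by blast
qed

lemma cos_less_cos_between:
  fixes r \<phi> :: real
  assumes "0 \<le> r" "r < \<phi>" "\<phi> < 2 * pi - r"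
  shows "cos \<phi> < cos r"
proof (cases "\<phi> \<le> pi")
  case True
  then show ?thesis
    using assms cos_monotone_0_pi by blast
next
  case False
  have "cos (2 * pi - \<phi>) < cos r"
    using False assms by (intro cos_monotone_0_pi) auto
  then show ?thesis
    by (simp add: cos_diff)
qed

text \<open>Vertex \<open>v\<close> sits on the binding at angle \<open>a v\<close>, and \<open>book_flip\<close> realises the
  graph involution \<open>\<sigma>\<close>.\<close>

locale book_labelling =
  fixes V :: "'v set" and E :: "'v set set" and \<sigma> :: "'v \<Rightarrow> 'v" and a :: "'v \<Rightarrow> real"
  assumes finite_V: "finite V"
    and edge: "e \<in> E \<Longrightarrow> \<exists>u v. e = {u, v} \<and> u \<in> V \<and> v \<in> V \<and> u \<noteq> v"
    and \<sigma>_in: "v \<in> V \<Longrightarrow> \<sigma> v \<in> V"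
    and \<sigma>_\<sigma>: "v \<in> V \<Longrightarrow> \<sigma> (\<sigma> v) = v"
    and a_\<sigma>: "v \<in> V \<Longrightarrow> a (\<sigma> v) = - a v"
    and inj_a: "inj_on a V"
    and a_bound: "v \<in> V \<Longrightarrow> \<bar>a v\<bar> < pi"
    and \<sigma>_edge: "e \<in> E \<Longrightarrow> \<sigma> ` e \<in> E"
    and antipodal_edge: "u \<in> V \<Longrightarrow> {u, \<sigma> u} \<in> E \<Longrightarrow>
      (\<forall>w\<in>V. \<bar>a u\<bar> \<le> \<bar>a w\<bar>) \<or> (\<forall>w\<in>V. \<bar>a w\<bar> \<le> \<bar>a u\<bar>)"
begin

lemma finite_E: "finite E"
proof (rule finite_subset)
  show "E \<subseteq> Pow V"
    using edge by blast
qed (simp add: finite_V)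

lemma \<sigma>_image_\<sigma>_image: "e \<in> E \<Longrightarrow> \<sigma> ` \<sigma> ` e = e"
  using edge \<sigma>_\<sigma> by fastforce

lemma sum_\<sigma>_image: "e \<in> E \<Longrightarrow> sum a (\<sigma> ` e) = - sum a e"
proof -
  assume "e \<in> E"
  then obtain u v where uv: "e = {u, v}" "u \<in> V" "v \<in> V" "u \<noteq> v"
    using edge by blast
  then have "\<sigma> u \<noteq> \<sigma> v"
    using \<sigma>_\<sigma> by metis
  then show ?thesis
    using uv a_\<sigma> by simp
qed

definition inner_edge :: "'v set \<Rightarrow> bool" where
  "inner_edge e \<longleftrightarrow> (\<forall>w\<in>V. Max (a ` e) \<le> \<bar>a w\<bar>)"

definition page_index :: "'v set \<Rightarrow> real" where
  "page_index e = 1 - 1 / (1 + real (to_nat_on E e))"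

definition page :: "'v set \<Rightarrow> real" where
  "page e = (if sum a e > 0 then pi * page_index e else pi * page_index (\<sigma> ` e) + pi)"

text \<open>The edges \<open>{u, \<sigma> u}\<close> are exactly those with label sum \<open>0\<close>.\<close>

definition edge_arc :: "'v set \<Rightarrow> real \<Rightarrow> nat \<Rightarrow> real" where
  "edge_arc e = (if sum a e \<noteq> 0 then book_arc 1 (page e) (Min (a ` e)) (Max (a ` e))
     else if inner_edge e then book_arc 0 0 (- Max (a ` e)) (Max (a ` e))
     else book_arc 0 0 (Max (a ` e)) (2 * pi - Max (a ` e)))"

definition vertex_point :: "'v \<Rightarrow> nat \<Rightarrow> real" where
  "vertex_point v = book_point (a v) 0 0"

lemma page_index_bounds: "0 \<le> page_index e" "page_index e < 1"
  by (simp_all add: page_index_def)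

lemma page_index_inj: "e \<in> E \<Longrightarrow> e' \<in> E \<Longrightarrow> page_index e = page_index e' \<Longrightarrow> e = e'"
  using finite_E by (simp add: page_index_def countable_finite)

lemma page_bounds: "0 \<le> page e" "page e < 2 * pi"
  using page_index_bounds[of e] page_index_bounds[of "\<sigma> ` e"]
  by (auto simp: page_def mult_less_cancel_left1)

lemma page_less_pi_iff: "page e < pi \<longleftrightarrow> 0 < sum a e"
proof -
  have bounds: "0 \<le> pi * page_index f" "pi * page_index f < pi" for f
    using page_index_bounds[of f] by simp_all
  show ?thesis
    unfolding page_def using bounds[of e] bounds[of "\<sigma> ` e"] by auto
qed

lemma page_inj:
  assumes "e \<in> E" "e' \<in> E" "sum a e \<noteq> 0" "sum a e' \<noteq> 0" "page e = page e'"
  shows "e = e'"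
proof -
  have "(0 < sum a e) = (0 < sum a e')"
    using assms(5) page_less_pi_iff by metis
  show ?thesis
  proof (cases "sum a e > 0")
    case True
    with \<open>(0 < sum a e) = (0 < sum a e')\<close> assms(5) have "page_index e = page_index e'"
      by (simp add: page_def)
    then show ?thesis
      using page_index_inj assms(1,2) by blast
  next
    case False
    with \<open>(0 < sum a e) = (0 < sum a e')\<close> assms(5) have "page_index (\<sigma> ` e) = page_index (\<sigma> ` e')"
      by (simp add: page_def)
    then have "\<sigma> ` e = \<sigma> ` e'"
      using page_index_inj \<sigma>_edge assms(1,2) by blast
    then show ?thesis
      using \<sigma>_image_\<sigma>_image assms(1,2) by metis
  qed
qed

lemma page_\<sigma>_image:
  assumes "e \<in> E" "sum a e \<noteq> 0"
  shows "sin (page (\<sigma> ` e)) = sin (page e + pi) \<and> cos (page (\<sigma> ` e)) = cos (page e + pi)"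
proof (cases "sum a e > 0")
  case True
  then have "page (\<sigma> ` e) = page e + pi"
    using assms sum_\<sigma>_image \<sigma>_image_\<sigma>_image by (simp add: page_def)
  then show ?thesis
    by simp
next
  case False
  then have "page (\<sigma> ` e) = page e - pi"
    using assms sum_\<sigma>_image \<sigma>_image_\<sigma>_image by (simp add: page_def)
  then show ?thesis
    by (simp add: sin_diff cos_diff sin_add cos_add)
qed

lemma page_edgeE:
  assumes "e \<in> E" "sum a e \<noteq> 0"
  obtains u v where "e = {u, v}" "u \<in> V" "v \<in> V" "a u < a v"
    "edge_arc e = book_arc 1 (page e) (a u) (a v)"
proof -
  obtain u v where uv: "e = {u, v}" "u \<in> V" "v \<in> V" "u \<noteq> v"
    using assms(1) edge by blast
  then have "a u \<noteq> a v"
    using inj_a by (auto simp: inj_on_def)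
  then consider "a u < a v" | "a v < a u"
    by linarith
  then show ?thesis
  proof cases
    case 1
    then show ?thesis
      using that uv assms(2) by (simp add: edge_arc_def)
  next
    case 2
    then show ?thesis
      using that[of v u] uv assms(2) by (simp add: edge_arc_def insert_commute)
  qed
qed

lemma binding_edgeE:
  assumes "e \<in> E" "sum a e = 0"
  obtains u where "e = {u, \<sigma> u}" "u \<in> V" "0 < a u" "Max (a ` e) = a u"
proof -
  obtain u v where uv: "e = {u, v}" "u \<in> V" "v \<in> V" "u \<noteq> v"
    using assms(1) edge by blast
  then have "a v = a (\<sigma> u)"
    using assms(2) a_\<sigma> by simp
  then have v: "v = \<sigma> u"
    using inj_a uv \<sigma>_in by (auto simp: inj_on_def)
  then have "a u \<noteq> 0"
    using uv a_\<sigma> inj_a by (metis inj_on_contraD neg_equal_0_iff_equal)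
  then consider "0 < a u" | "0 < a v"
    using v a_\<sigma> uv by fastforce
  then show ?thesis
  proof cases
    case 1
    then show ?thesis
      using that uv v a_\<sigma> by simp
  next
    case 2
    then show ?thesis
      using that[of v] uv v a_\<sigma> \<sigma>_\<sigma> \<sigma>_in by (simp add: insert_commute)
  qed
qed

lemma binding_edge_arc:
  assumes "e = {u, \<sigma> u}" "u \<in> V" "0 < a u"
  shows "edge_arc e = (if inner_edge e then book_arc 0 0 (- a u) (a u) else book_arc 0 0 (a u) (2 * pi - a u))"
proof -
  have "\<sigma> u \<noteq> u"
    using assms(2,3) a_\<sigma> by force
  then show ?thesis
    using assms a_\<sigma> by (simp add: edge_arc_def)
qed

lemma outer_edge_bound:
  assumes "e \<in> E" "e = {u, \<sigma> u}" "u \<in> V" "0 < a u" "\<not> inner_edge e" "w \<in> V"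
  shows "\<bar>a w\<bar> \<le> a u"
  using antipodal_edge[of u] assms a_\<sigma> by (auto simp: inner_edge_def)

lemma binding_edges_unique:
  assumes "e \<in> E" "e' \<in> E" "sum a e = 0" "sum a e' = 0" "Max (a ` e) = Max (a ` e')"
  shows "e = e'"
proof -
  obtain u where "e = {u, \<sigma> u}" "u \<in> V" "Max (a ` e) = a u"
    using binding_edgeE assms(1,3) by blast
  moreover obtain u' where "e' = {u', \<sigma> u'}" "u' \<in> V" "Max (a ` e') = a u'"
    using binding_edgeE assms(2,4) by blast
  ultimately show ?thesis
    using assms(5) inj_a by (auto simp: inj_on_def)
qed

lemma binding_edge_radius_bounds:
  assumes "e \<in> E" "sum a e = 0"
  shows "0 < Max (a ` e)" "Max (a ` e) < pi"
proof -
  obtain u where "u \<in> V" "0 < a u" "Max (a ` e) = a u"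
    using binding_edgeE assms by blast
  then show "0 < Max (a ` e)" "Max (a ` e) < pi"
    using a_bound[of u] by simp_all
qed

lemma binding_edges_distinct:
  assumes "e \<in> E" "e' \<in> E" "sum a e = 0" "sum a e' = 0" "e \<noteq> e'"
  shows "inner_edge e \<and> \<not> inner_edge e' \<and> Max (a ` e) < Max (a ` e')
    \<or> inner_edge e' \<and> \<not> inner_edge e \<and> Max (a ` e') < Max (a ` e)"
proof -
  obtain u where u: "e = {u, \<sigma> u}" "u \<in> V" "0 < a u" "Max (a ` e) = a u"
    using binding_edgeE assms(1,3) by blast
  obtain u' where u': "e' = {u', \<sigma> u'}" "u' \<in> V" "0 < a u'" "Max (a ` e') = a u'"
    using binding_edgeE assms(2,4) by blast
  have ne: "a u \<noteq> a u'"
    using binding_edges_unique assms u u' by metis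
  have inner: "a u \<le> a u'" if "inner_edge e"
    using that u u' by (auto simp: inner_edge_def)
  have inner': "a u' \<le> a u" if "inner_edge e'"
    using that u u' by (auto simp: inner_edge_def)
  have outer: "a u' \<le> a u" if "\<not> inner_edge e"
    using outer_edge_bound[OF assms(1) u(1-3) that u'(2)] u'(3) by simp
  have outer': "a u \<le> a u'" if "\<not> inner_edge e'"
    using outer_edge_bound[OF assms(2) u'(1-3) that u(2)] u(3) by simp
  show ?thesis
  proof (cases "inner_edge e")
    case True
    then have "\<not> inner_edge e'" "a u < a u'"
      using inner inner' ne by force+
    then show ?thesis
      using True u(4) u'(4) by simp
  next
    case False
    then have "inner_edge e'" "a u' < a u"
      using outer outer' ne by force+
    then show ?thesis
      using False u(4) u'(4) by simp
  qed
qed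

lemma continuous_map_edge_arc: "continuous_map (top_of_set {0..1}) S3 (edge_arc e)"
  by (simp add: edge_arc_def continuous_map_book_arc)

lemma edge_arc_inj_ends:
  assumes "e \<in> E"
  shows "inj_on (edge_arc e) {0..1} \<and> edge_arc e ` {0, 1} = vertex_point ` e"
proof (cases "sum a e = 0")
  case False
  then obtain u v where uv: "e = {u, v}" "u \<in> V" "v \<in> V" "a u < a v"
    "edge_arc e = book_arc 1 (page e) (a u) (a v)"
    using page_edgeE assms by blast
  have "\<bar>a v - a u\<bar> < 2 * pi"
    using a_bound[OF uv(2)] a_bound[OF uv(3)] by linarith
  then show ?thesis
    using uv inj_on_book_arc[of "a u" "a v" 1] by (simp add: book_arc_ends vertex_point_def)
next
  case True
  then obtain u where u: "e = {u, \<sigma> u}" "u \<in> V" "0 < a u"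
    using binding_edgeE assms by blast
  have r: "a u < pi" "vertex_point (\<sigma> u) = book_point (- a u) 0 0"
    using a_bound[OF u(2)] a_\<sigma>[OF u(2)] by (simp_all add: vertex_point_def)
  show ?thesis
  proof (cases "inner_edge e")
    case True
    then show ?thesis
      using u r inj_on_book_arc[of "- a u" "a u" 0]
      by (simp add: binding_edge_arc book_arc_ends vertex_point_def insert_commute)
  next
    case False
    have "book_point (2 * pi - a u) 0 0 = book_point (- a u) 0 0"
      by (rule book_point_eqI) (simp_all add: sin_diff cos_diff)
    with False show ?thesis
      using u r inj_on_book_arc[of "a u" "2 * pi - a u" 0]
      by (simp add: binding_edge_arc book_arc_ends vertex_point_def)
  qed
qed

lemma page_arc_interior:
  assumes "e \<in> E" "sum a e \<noteq> 0" "0 < t" "t < 1"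
  shows "\<exists>\<phi> \<psi>. edge_arc e t = book_point \<phi> \<psi> (page e) \<and> 0 < \<psi> \<and> \<psi> < pi / 2"
proof -
  obtain u v where "edge_arc e = book_arc 1 (page e) (a u) (a v)"
    using page_edgeE assms(1,2) by blast
  moreover have "0 < t * (1 - t)" "t * (1 - t) < pi / 2"
    using assms(3,4) book_arc_height_bounds[of 1 t] by simp_all
  ultimately show ?thesis
    by (auto simp: book_arc_def)
qed

lemma binding_arc_interior:
  assumes "e \<in> E" "sum a e = 0" "0 < t" "t < 1"
  shows "\<exists>\<phi>. edge_arc e t = book_point \<phi> 0 0 \<and>
    (if inner_edge e then cos (Max (a ` e)) < cos \<phi> else cos \<phi> < cos (Max (a ` e)))"
proof -
  obtain u where u: "e = {u, \<sigma> u}" "u \<in> V" "0 < a u" "Max (a ` e) = a u"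
    using binding_edgeE assms(1,2) by blast
  have "a u < pi"
    using a_bound[OF u(2)] by simp
  show ?thesis
  proof (cases "inner_edge e")
    case True
    define \<phi> where "\<phi> = - a u + t * (a u - - a u)"
    have "\<bar>\<phi>\<bar> < a u"
      using assms(3,4) u(3) by (auto simp: \<phi>_def abs_less_iff algebra_simps)
    then have "cos (a u) < cos \<phi>"
      using cos_monotone_0_pi[of "\<bar>\<phi>\<bar>" "a u"] \<open>a u < pi\<close> by simp
    then show ?thesis
      using True u by (auto simp: binding_edge_arc book_arc_def \<phi>_def)
  next
    case False
    define \<phi> where "\<phi> = a u + t * (2 * pi - a u - a u)"
    have "0 < 2 * pi - a u - a u"
      using \<open>a u < pi\<close> by simp
    then have "0 < t * (2 * pi - a u - a u)" "t * (2 * pi - a u - a u) < 2 * pi - a u - a u"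
      using assms(3,4) mult_strict_right_mono[of t 1] by simp_all
    then have "a u < \<phi>" "\<phi> < 2 * pi - a u"
      unfolding \<phi>_def by linarith+
    then have "cos \<phi> < cos (a u)"
      using cos_less_cos_between u(3) by simp
    then show ?thesis
      using False u by (auto simp: binding_edge_arc book_arc_def \<phi>_def)
  qed
qed

lemma edge_arc_avoids_vertex:
  assumes "e \<in> E" "0 < t" "t < 1" "w \<in> V"
  shows "edge_arc e t \<noteq> vertex_point w"
proof
  assume eq: "edge_arc e t = vertex_point w"
  show False
  proof (cases "sum a e = 0")
    case False
    with page_arc_interior assms obtain \<phi> \<psi> where "edge_arc e t = book_point \<phi> \<psi> (page e)" "0 < \<psi>" "\<psi> < pi / 2"
      by blast
    then show False
      using eq book_point_page_ne_binding by (metis vertex_point_def)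
  next
    case True
    with binding_arc_interior assms obtain \<phi> where \<phi>: "edge_arc e t = book_point \<phi> 0 0"
      "if inner_edge e then cos (Max (a ` e)) < cos \<phi> else cos \<phi> < cos (Max (a ` e))"
      by blast
    obtain u where u: "e = {u, \<sigma> u}" "u \<in> V" "0 < a u" "Max (a ` e) = a u"
      using binding_edgeE assms(1) True by blast
    have "cos \<phi> = cos (a w)"
      using eq \<phi>(1) book_point_eqD[of \<phi> 0 0 "a w" 0 0] by (simp add: vertex_point_def)
    moreover have "cos (a w) \<le> cos (a u)" if "inner_edge e"
      using that u assms(4) a_bound[OF assms(4)] cos_monotone_0_pi_le[of "a u" "\<bar>a w\<bar>"]
      by (simp add: inner_edge_def)
    moreover have "cos (a u) \<le> cos (a w)" if "\<not> inner_edge e"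
      using outer_edge_bound[OF assms(1) u(1-3) that assms(4)] u a_bound[OF u(2)]
        cos_monotone_0_pi_le[of "\<bar>a w\<bar>" "a u"] by simp
    ultimately show False
      using \<phi>(2) u(4) by (auto split: if_splits)
  qed
qed

lemma page_arcs_disjoint:
  assumes "e \<in> E" "e' \<in> E" "e \<noteq> e'" "sum a e \<noteq> 0" "sum a e' \<noteq> 0"
    and "0 < t" "t < 1" "0 < t'" "t' < 1"
  shows "edge_arc e t \<noteq> edge_arc e' t'"
proof
  assume eq: "edge_arc e t = edge_arc e' t'"
  obtain \<phi> \<psi> \<phi>' \<psi>' where "edge_arc e t = book_point \<phi> \<psi> (page e)" "0 < \<psi>" "\<psi> < pi / 2"
    "edge_arc e' t' = book_point \<phi>' \<psi>' (page e')" "0 < \<psi>'" "\<psi>' < pi / 2"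
    using page_arc_interior assms by metis
  then have "sin (page e) = sin (page e')" "cos (page e) = cos (page e')"
    using eq book_point_eqD[of \<phi> \<psi> "page e" \<phi>' \<psi>' "page e'"] by auto
  moreover have "\<bar>page e - page e'\<bar> < 2 * pi"
    using page_bounds[of e] page_bounds[of e'] by linarith
  ultimately show False
    using sin_cos_eq_imp_eq page_inj assms(1-5) by blast
qed

lemma page_arc_ne_binding_arc:
  assumes "e \<in> E" "e' \<in> E" "sum a e \<noteq> 0" "sum a e' = 0" "0 < t" "t < 1" "0 < t'" "t' < 1"
  shows "edge_arc e t \<noteq> edge_arc e' t'"
proof -
  obtain \<phi> \<psi> where "edge_arc e t = book_point \<phi> \<psi> (page e)" "0 < \<psi>" "\<psi> < pi / 2"
    using page_arc_interior assms by blast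
  moreover obtain \<phi>' where "edge_arc e' t' = book_point \<phi>' 0 0"
    using binding_arc_interior assms by blast
  ultimately show ?thesis
    using book_point_page_ne_binding by metis
qed

lemma binding_arcs_disjoint:
  assumes "e \<in> E" "e' \<in> E" "e \<noteq> e'" "sum a e = 0" "sum a e' = 0"
    and "0 < t" "t < 1" "0 < t'" "t' < 1"
  shows "edge_arc e t \<noteq> edge_arc e' t'"
proof
  assume eq: "edge_arc e t = edge_arc e' t'"
  obtain \<phi> where \<phi>: "edge_arc e t = book_point \<phi> 0 0"
    "if inner_edge e then cos (Max (a ` e)) < cos \<phi> else cos \<phi> < cos (Max (a ` e))"
    using binding_arc_interior[OF assms(1,4,6,7)] by blast
  obtain \<phi>' where \<phi>': "edge_arc e' t' = book_point \<phi>' 0 0"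
    "if inner_edge e' then cos (Max (a ` e')) < cos \<phi>' else cos \<phi>' < cos (Max (a ` e'))"
    using binding_arc_interior[OF assms(2,5,8,9)] by blast
  have "cos \<phi> = cos \<phi>'"
    using eq \<phi>(1) \<phi>'(1) book_point_eqD[of \<phi> 0 0 \<phi>' 0 0] by simp
  note radius = binding_edge_radius_bounds[OF assms(1,4)] binding_edge_radius_bounds[OF assms(2,5)]
  from binding_edges_distinct[OF assms(1,2,4,5,3)] show False
  proof (elim disjE conjE)
    assume "inner_edge e" "\<not> inner_edge e'" "Max (a ` e) < Max (a ` e')"
    moreover have "cos (Max (a ` e')) < cos (Max (a ` e))"
      using calculation(3) radius by (intro cos_monotone_0_pi) auto
    ultimately show False
      using \<phi>(2) \<phi>'(2) \<open>cos \<phi> = cos \<phi>'\<close> by simp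
  next
    assume "inner_edge e'" "\<not> inner_edge e" "Max (a ` e') < Max (a ` e)"
    moreover have "cos (Max (a ` e)) < cos (Max (a ` e'))"
      using calculation(3) radius by (intro cos_monotone_0_pi) auto
    ultimately show False
      using \<phi>(2) \<phi>'(2) \<open>cos \<phi> = cos \<phi>'\<close> by simp
  qed
qed

lemma edge_arcs_disjoint:
  assumes "e \<in> E" "e' \<in> E" "e \<noteq> e'" "0 < t" "t < 1" "0 < t'" "t' < 1"
  shows "edge_arc e t \<noteq> edge_arc e' t'"
proof (cases "sum a e = 0"; cases "sum a e' = 0")
  assume "sum a e = 0" "sum a e' = 0"
  then show ?thesis
    using binding_arcs_disjoint assms by blast
next
  assume "sum a e = 0" "sum a e' \<noteq> 0"
  then show ?thesis
    using page_arc_ne_binding_arc[OF assms(2,1) _ _ assms(6,7,4,5)] by (metis not_sym)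
next
  assume "sum a e \<noteq> 0" "sum a e' = 0"
  then show ?thesis
    using page_arc_ne_binding_arc assms by blast
next
  assume "sum a e \<noteq> 0" "sum a e' \<noteq> 0"
  then show ?thesis
    using page_arcs_disjoint assms by blast
qed

lemma graph_embedding: "graph_embedding_S3 V E vertex_point edge_arc"
  unfolding graph_embedding_S3_def
proof (intro conjI ballI impI)
  show "inj_on vertex_point V"
  proof
    fix u v
    assume uv: "u \<in> V" "v \<in> V" "vertex_point u = vertex_point v"
    then have "sin (a u) = sin (a v)" "cos (a u) = cos (a v)"
      using book_point_eqD[of "a u" 0 0 "a v" 0 0] by (simp_all add: vertex_point_def)
    moreover have "\<bar>a u - a v\<bar> < 2 * pi"
      using a_bound[OF uv(1)] a_bound[OF uv(2)] by linarith
    ultimately have "a u = a v"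
      by (rule sin_cos_eq_imp_eq)
    then show "u = v"
      using inj_a uv by (simp add: inj_on_eq_iff)
  qed
  show "vertex_point ` V \<subseteq> topspace S3"
    using book_point_in_S3 by (auto simp: vertex_point_def)
next
  fix e
  assume e: "e \<in> E"
  show "continuous_map (top_of_set {0..1}) S3 (edge_arc e)"
    by (rule continuous_map_edge_arc)
  show "inj_on (edge_arc e) {0..1}" "edge_arc e ` {0, 1} = vertex_point ` e"
    using edge_arc_inj_ends[OF e] by auto
  show "edge_arc e ` {0<..<1} \<inter> vertex_point ` V = {}"
    using edge_arc_avoids_vertex[OF e] by fastforce
next
  fix e e'
  assume "e \<in> E" "e' \<in> E" "e \<noteq> e'"
  then show "edge_arc e ` {0<..<1} \<inter> edge_arc e' ` {0<..<1} = {}"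
    using edge_arcs_disjoint by fastforce
qed

lemma book_flip_vertex_point: "v \<in> V \<Longrightarrow> book_flip (vertex_point v) = vertex_point (\<sigma> v)"
  by (simp add: vertex_point_def book_flip_book_point a_\<sigma> book_point_binding[of _ pi 0])

lemma book_flip_edge_arc:
  assumes "e \<in> E"
  shows "book_flip (edge_arc e t) = edge_arc (\<sigma> ` e) (1 - t)"
proof (cases "sum a e = 0")
  case False
  then obtain u v where uv: "e = {u, v}" "u \<in> V" "v \<in> V" "a u < a v"
    and arc: "edge_arc e = book_arc 1 (page e) (a u) (a v)"
    using page_edgeE assms by blast
  have "\<sigma> ` e = {\<sigma> v, \<sigma> u}" "a (\<sigma> v) < a (\<sigma> u)" "sum a (\<sigma> ` e) \<noteq> 0"
    using uv False sum_\<sigma>_image[OF assms] a_\<sigma> by auto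
  then have "edge_arc (\<sigma> ` e) = book_arc 1 (page (\<sigma> ` e)) (- a v) (- a u)"
    using uv a_\<sigma> by (simp add: edge_arc_def)
  also have "book_arc 1 (page (\<sigma> ` e)) = book_arc 1 (page e + pi)"
    using page_\<sigma>_image[OF assms False] by (intro book_arc_page_cong) auto
  finally show ?thesis
    by (simp add: arc book_flip_book_arc)
next
  case True
  then obtain u where u: "e = {u, \<sigma> u}" "u \<in> V" "0 < a u"
    using binding_edgeE assms by blast
  then have flip_e: "\<sigma> ` e = e"
    using \<sigma>_\<sigma> by auto
  have flip: "book_flip (book_arc 0 0 \<alpha> \<beta> t) = book_arc 0 0 (- \<beta>) (- \<alpha>) (1 - t)" for \<alpha> \<beta>
    unfolding book_flip_book_arc book_arc_binding[of "0 + pi" 0] ..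
  have shift: "book_arc 0 0 (- (2 * pi - a u)) (- a u) = book_arc 0 0 (a u) (2 * pi - a u)"
    using book_arc_shift_2pi[of 0 0 "- (2 * pi - a u)" "- a u"] by simp
  show ?thesis
  proof (cases "inner_edge e")
    case True
    then show ?thesis
      unfolding flip_e binding_edge_arc[OF u] using flip[of "- a u" "a u"] by simp
  next
    case False
    then show ?thesis
      unfolding flip_e binding_edge_arc[OF u] using flip[of "a u" "2 * pi - a u"] shift by simp
  qed
qed

lemma book_flip_graph_image:
  "book_flip ` graph_image_S3 V E vertex_point edge_arc \<subseteq> graph_image_S3 V E vertex_point edge_arc"
proof
  fix y
  assume "y \<in> book_flip ` graph_image_S3 V E vertex_point edge_arc"
  then consider v where "v \<in> V" "y = book_flip (vertex_point v)"
    | e t where "e \<in> E" "t \<in> {0..1}" "y = book_flip (edge_arc e t)"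
    unfolding graph_image_S3_def by blast
  then show "y \<in> graph_image_S3 V E vertex_point edge_arc"
  proof cases
    case 1
    then show ?thesis
      using book_flip_vertex_point \<sigma>_in unfolding graph_image_S3_def by simp
  next
    case 2
    then have "y \<in> edge_arc (\<sigma> ` e) ` {0..1}"
      using book_flip_edge_arc by (intro image_eqI[of _ _ "1 - t"]) auto
    then show ?thesis
      using \<sigma>_edge[OF 2(1)] unfolding graph_image_S3_def by blast
  qed
qed

theorem achirally_embeddable: "achirally_embeddable V E"
  using graph_embedding orientation_reversing_book_flip book_flip_book_flip book_flip_graph_image
  by (rule achirally_embeddableI)

end

definition partner :: "nat \<Rightarrow> nat \<Rightarrow> nat" where
  "partner s j = (if odd j then j - 1 else if j + 1 < s then j + 1 else j)"

lemma partner_less: "j < s \<Longrightarrow> partner s j < s"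
  by (auto simp: partner_def)

lemma partner_partner: "j < s \<Longrightarrow> partner s (partner s j) = j"
  by (auto simp: partner_def)

lemma partner_div_2: "partner s j div 2 = j div 2"
  by (auto simp: partner_def elim: oddE)

lemma partner_eq_self_iff: "partner s j = j \<longleftrightarrow> even j \<and> \<not> j + 1 < s"
  by (auto simp: partner_def elim: oddE)

lemma odd_partner: "partner s j \<noteq> j \<Longrightarrow> odd (partner s j) \<longleftrightarrow> even j"
  by (auto simp: partner_def)

lemma div_2_eq_imp_partner: "j div 2 = j' div 2 \<Longrightarrow> j' < s \<Longrightarrow> j' = j \<or> j' = partner s j"
  by (auto simp: partner_def) presburger+

lemma inj_on_odd_labelling:
  assumes "\<And>v. v \<in> V \<Longrightarrow> a (\<sigma> v) = - a v"
    and "\<And>v w. v \<in> V \<Longrightarrow> w \<in> V \<Longrightarrow> \<bar>a v\<bar> = \<bar>a w\<bar> \<Longrightarrow> w = v \<or> w = \<sigma> v"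
    and "\<And>v. v \<in> V \<Longrightarrow> a v = 0 \<Longrightarrow> \<sigma> v = v"
  shows "inj_on (a :: 'v \<Rightarrow> real) V"
proof
  fix v w
  assume vw: "v \<in> V" "w \<in> V" "a v = a w"
  then consider "w = v" | "w = \<sigma> v"
    using assms(2) by force
  then show "v = w"
  proof cases
    case 2
    then have "a v = 0"
      using vw assms(1) by simp
    then show ?thesis
      using 2 vw(1) assms(3) by simp
  qed simp
qed

text \<open>Parts \<open>pa, pb\<close> (placed outermost) and \<open>za, zb\<close> (innermost) are pairs of singleton
  parts exchanged by the symmetry; an index \<open>\<ge> length L\<close> encodes an absent pair.  Every other
  part is mapped to itself, and only the part \<open>pc\<close> may have odd size, which is excluded when
  the inner pair is present since its fixed vertex would lie inside the innermost pair.\<close>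

locale special_parts =
  fixes L :: "nat list" and pa pb za zb pc :: nat
  assumes distinct_special: "distinct [pa, pb, za, zb]"
    and outer_pair: "pa < length L \<longleftrightarrow> pb < length L" "pa < length L \<Longrightarrow> L ! pa = 1 \<and> L ! pb = 1"
    and inner_pair: "za < length L \<longleftrightarrow> zb < length L" "za < length L \<Longrightarrow> L ! za = 1 \<and> L ! zb = 1"
    and odd_part: "i < length L \<Longrightarrow> odd (L ! i) \<Longrightarrow> i \<in> {pa, pb, za, zb, pc}"
    and odd_part_inner: "za < length L \<Longrightarrow> i < length L \<Longrightarrow> odd (L ! i) \<Longrightarrow> i \<in> {pa, pb, za, zb}"
begin

definition part_swap :: "nat \<Rightarrow> nat" where
  "part_swap i = (if i = pa then pb else if i = pb then pa else if i = za then zb else if i = zb then za else i)"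

definition cm_\<sigma> :: "nat \<times> nat \<Rightarrow> nat \<times> nat" where
  "cm_\<sigma> v = (if fst v \<in> {pa, pb, za, zb} then (part_swap (fst v), snd v)
     else (fst v, partner (L ! fst v) (snd v)))"

text \<open>The \<open>cm_\<sigma>\<close>-orbit \<open>{(i, 2k), (i, 2k + 1)}\<close> in an ordinary part gets the radius
  \<open>1 - 1 / (2 + \<langle>i, k\<rangle>) \<in> [1/2, 1)\<close>, distinct for distinct orbits; the outer pair gets the
  largest radius, the inner pair the smallest and a fixed vertex the radius \<open>0\<close>.\<close>

definition radius :: "nat \<times> nat \<Rightarrow> real" where
  "radius v = (if fst v \<in> {pa, pb} then 1 else if fst v \<in> {za, zb} then 1 / 4
     else if partner (L ! fst v) (snd v) = snd v then 0
     else 1 - 1 / (2 + real (prod_encode (fst v, snd v div 2))))"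

definition label :: "nat \<times> nat \<Rightarrow> real" where
  "label v = (if fst v \<in> {pb, zb} \<or> odd (snd v) then - radius v else radius v)"

lemma cm_vertices_iff: "v \<in> cm_vertices L \<longleftrightarrow> fst v < length L \<and> snd v < L ! fst v"
  by (cases v) (simp add: cm_vertices_def)

lemma special_vertex:
  assumes "v \<in> cm_vertices L" "fst v \<in> {pa, pb, za, zb}"
  shows "snd v = 0" "part_swap (fst v) < length L" "L ! part_swap (fst v) = 1"
  using assms outer_pair inner_pair distinct_special by (auto simp: cm_vertices_iff part_swap_def)

lemma part_swap_special: "i \<in> {pa, pb, za, zb} \<Longrightarrow> part_swap i \<in> {pa, pb, za, zb} \<and> part_swap (part_swap i) = i"
  using distinct_special by (auto simp: part_swap_def)

lemma part_swap_inj: "part_swap i = part_swap i' \<Longrightarrow> i = i'"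
  using distinct_special by (auto simp: part_swap_def split: if_splits)

lemma fst_cm_\<sigma>: "fst (cm_\<sigma> v) = part_swap (fst v)"
  by (simp add: cm_\<sigma>_def part_swap_def)

lemma cm_\<sigma>_in: "v \<in> cm_vertices L \<Longrightarrow> cm_\<sigma> v \<in> cm_vertices L"
  using special_vertex[of v] by (auto simp: cm_\<sigma>_def cm_vertices_iff partner_less)

lemma cm_\<sigma>_cm_\<sigma>: "v \<in> cm_vertices L \<Longrightarrow> cm_\<sigma> (cm_\<sigma> v) = v"
  using part_swap_special[of "fst v"] by (auto simp: cm_\<sigma>_def cm_vertices_iff partner_partner)

lemma radius_cm_\<sigma>: "v \<in> cm_vertices L \<Longrightarrow> radius (cm_\<sigma> v) = radius v"
  using part_swap_special[of "fst v"] distinct_special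
  by (auto simp: radius_def cm_\<sigma>_def cm_vertices_iff partner_partner partner_div_2 part_swap_def)

lemma label_cm_\<sigma>:
  assumes "v \<in> cm_vertices L"
  shows "label (cm_\<sigma> v) = - label v"
proof (cases "fst v \<in> {pa, pb, za, zb}")
  case True
  then have "snd v = 0" "cm_\<sigma> v = (part_swap (fst v), 0)"
    using special_vertex[OF assms] by (simp_all add: cm_\<sigma>_def)
  moreover have "part_swap (fst v) \<in> {pb, zb} \<longleftrightarrow> fst v \<notin> {pb, zb}"
    using True distinct_special by (auto simp: part_swap_def)
  ultimately show ?thesis
    using radius_cm_\<sigma>[OF assms] by (auto simp: label_def)
next
  case False
  then have \<sigma>v: "cm_\<sigma> v = (fst v, partner (L ! fst v) (snd v))"
    by (simp add: cm_\<sigma>_def)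
  show ?thesis
  proof (cases "partner (L ! fst v) (snd v) = snd v")
    case True
    then have "radius v = 0"
      using False by (simp add: radius_def)
    then show ?thesis
      using True \<sigma>v by (simp add: label_def)
  next
    case nonfixed: False
    then have "odd (partner (L ! fst v) (snd v)) \<longleftrightarrow> even (snd v)"
      by (rule odd_partner)
    moreover have "fst v \<notin> {pb, zb}"
      using False by simp
    ultimately show ?thesis
      using \<sigma>v radius_cm_\<sigma>[OF assms] by (auto simp: label_def)
  qed
qed

lemma radius_nonneg: "0 \<le> radius v"
  by (simp add: radius_def)

lemma abs_label: "\<bar>label v\<bar> = radius v"
  using radius_nonneg[of v] by (simp add: label_def)

lemma radius_le_1: "radius v \<le> 1"
  by (simp add: radius_def)

lemma radius_classes:
  assumes "v \<in> cm_vertices L"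
  obtains "fst v \<in> {pa, pb}" "radius v = 1"
    | "fst v \<in> {za, zb}" "radius v = 1 / 4"
    | "fst v = pc" "fst v \<notin> {pa, pb, za, zb}" "odd (L ! fst v)" "snd v + 1 = L ! fst v" "radius v = 0"
    | "fst v \<notin> {pa, pb, za, zb}" "partner (L ! fst v) (snd v) \<noteq> snd v"
      "radius v = 1 - 1 / (2 + real (prod_encode (fst v, snd v div 2)))" "1 / 2 \<le> radius v"
proof -
  consider "fst v \<in> {pa, pb}" | "fst v \<in> {za, zb}"
    | "fst v \<notin> {pa, pb, za, zb}" "partner (L ! fst v) (snd v) = snd v"
    | "fst v \<notin> {pa, pb, za, zb}" "partner (L ! fst v) (snd v) \<noteq> snd v"
    by blast
  then show ?thesis
  proof cases
    case 3
    then have "even (snd v)" "snd v + 1 = L ! fst v"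
      using assms by (auto simp: partner_eq_self_iff cm_vertices_iff)
    then have "odd (L ! fst v)"
      by (simp flip: \<open>snd v + 1 = L ! fst v\<close>)
    then have "fst v = pc"
      using odd_part[of "fst v"] assms 3(1) by (auto simp: cm_vertices_iff)
    with 3 that(3) show ?thesis
      using \<open>snd v + 1 = L ! fst v\<close> \<open>odd (L ! fst v)\<close> by (simp add: radius_def)
  qed (use that distinct_special in \<open>auto simp: radius_def field_simps\<close>)
qed

lemma radius_eq_imp_orbit:
  assumes v: "v \<in> cm_vertices L" and w: "w \<in> cm_vertices L" and eq: "radius v = radius w"
  shows "w = v \<or> w = cm_\<sigma> v"
proof -
  have "(fst v \<in> {pa, pb} \<and> fst w \<in> {pa, pb}) \<or> (fst v \<in> {za, zb} \<and> fst w \<in> {za, zb})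
      \<or> (fst v = pc \<and> fst w = pc \<and> snd v + 1 = L ! fst v \<and> snd w + 1 = L ! fst w)
      \<or> (fst v \<notin> {pa, pb, za, zb} \<and> partner (L ! fst v) (snd v) \<noteq> snd v \<and>
         prod_encode (fst v, snd v div 2) = prod_encode (fst w, snd w div 2))"
    by (rule radius_classes[OF v]; rule radius_classes[OF w]) (use eq in \<open>auto simp: field_simps\<close>)
  then show ?thesis
  proof (elim disjE conjE)
    assume "fst v \<in> {pa, pb}" "fst w \<in> {pa, pb}"
    then show ?thesis
      using special_vertex[OF v] special_vertex[OF w] distinct_special
      by (cases v, cases w) (auto simp: cm_\<sigma>_def part_swap_def)
  next
    assume "fst v \<in> {za, zb}" "fst w \<in> {za, zb}"
    then show ?thesis
      using special_vertex[OF v] special_vertex[OF w] distinct_special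
      by (cases v, cases w) (auto simp: cm_\<sigma>_def part_swap_def)
  next
    assume "fst v = pc" "fst w = pc" "snd v + 1 = L ! fst v" "snd w + 1 = L ! fst w"
    then show ?thesis
      by (simp add: prod_eq_iff)
  next
    assume v': "fst v \<notin> {pa, pb, za, zb}" "partner (L ! fst v) (snd v) \<noteq> snd v"
      and "prod_encode (fst v, snd v div 2) = prod_encode (fst w, snd w div 2)"
    then have "fst w = fst v" "snd w div 2 = snd v div 2"
      by simp_all
    then have "snd w = snd v \<or> snd w = partner (L ! fst v) (snd v)"
      using div_2_eq_imp_partner[of "snd v" "snd w"] w by (auto simp: cm_vertices_iff)
    then show ?thesis
      using v' \<open>fst w = fst v\<close> by (auto simp: cm_\<sigma>_def prod_eq_iff)
  qed
qed

lemma label_zero_imp_fixed: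
  assumes "v \<in> cm_vertices L" "label v = 0"
  shows "cm_\<sigma> v = v"
proof -
  have "radius v = 0"
    using assms(2) abs_label[of v] by simp
  then have "fst v \<notin> {pa, pb, za, zb}" "partner (L ! fst v) (snd v) = snd v"
    by (auto simp: radius_def split: if_splits)
  then show ?thesis
    by (simp add: cm_\<sigma>_def)
qed

lemma cm_vertices_eq_Sigma: "cm_vertices L = (SIGMA i:{..<length L}. {..<L ! i})"
  by (auto simp: cm_vertices_def)

lemma cm_edges_iff:
  "e \<in> cm_edges L \<longleftrightarrow> (\<exists>x y. e = {x, y} \<and> x \<in> cm_vertices L \<and> y \<in> cm_vertices L \<and> fst x \<noteq> fst y)"
  by (simp add: cm_edges_def)

lemma antipodal_edge_special:
  assumes "u \<in> cm_vertices L" "{u, cm_\<sigma> u} \<in> cm_edges L"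
  shows "fst u \<in> {pa, pb, za, zb}"
proof -
  have "fst u \<noteq> fst (cm_\<sigma> u)"
    using assms(2) by (auto simp: cm_edges_iff doubleton_eq_iff)
  then show ?thesis
    by (auto simp: fst_cm_\<sigma> part_swap_def split: if_splits)
qed

lemma inner_pair_radius:
  assumes "za < length L" "w \<in> cm_vertices L"
  shows "1 / 4 \<le> radius w"
proof (rule radius_classes[OF assms(2)])
  assume "fst w \<notin> {pa, pb, za, zb}" "odd (L ! fst w)"
  then show ?thesis
    using odd_part_inner[OF assms(1), of "fst w"] assms(2) by (simp add: cm_vertices_iff)
qed linarith+

lemma cm_\<sigma>_image_edge:
  assumes "e \<in> cm_edges L"
  shows "cm_\<sigma> ` e \<in> cm_edges L"
proof -
  obtain x y where "e = {x, y}" "x \<in> cm_vertices L" "y \<in> cm_vertices L" "fst x \<noteq> fst y"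
    using assms unfolding cm_edges_iff by blast
  then have "cm_\<sigma> ` e = {cm_\<sigma> x, cm_\<sigma> y}" "cm_\<sigma> x \<in> cm_vertices L" "cm_\<sigma> y \<in> cm_vertices L"
    "fst (cm_\<sigma> x) \<noteq> fst (cm_\<sigma> y)"
    using cm_\<sigma>_in part_swap_inj by (auto simp: fst_cm_\<sigma>)
  then show ?thesis
    unfolding cm_edges_iff by blast
qed

lemma antipodal_edge_extreme:
  assumes u: "u \<in> cm_vertices L" "{u, cm_\<sigma> u} \<in> cm_edges L"
  shows "(\<forall>w\<in>cm_vertices L. \<bar>label u\<bar> \<le> \<bar>label w\<bar>) \<or> (\<forall>w\<in>cm_vertices L. \<bar>label w\<bar> \<le> \<bar>label u\<bar>)"
proof -
  have "fst u \<in> {pa, pb, za, zb}"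
    using antipodal_edge_special u by blast
  then consider "radius u = 1" | "radius u = 1 / 4" "za < length L"
    using u(1) inner_pair(1) distinct_special by (auto simp: radius_def cm_vertices_iff)
  then show ?thesis
  proof cases
    case 1
    then show ?thesis
      using radius_le_1 by (simp add: abs_label)
  next
    case 2
    have "\<forall>w\<in>cm_vertices L. radius u \<le> radius w"
    proof
      fix w
      assume "w \<in> cm_vertices L"
      then show "radius u \<le> radius w"
        using inner_pair_radius[OF 2(2) \<open>w \<in> cm_vertices L\<close>] 2(1) by linarith
    qed
    then show ?thesis
      by (simp add: abs_label)
  qed
qed

sublocale book_labelling "cm_vertices L" "cm_edges L" cm_\<sigma> label
proof
  show "finite (cm_vertices L)"
    by (simp add: cm_vertices_eq_Sigma)
  show "\<exists>u v. e = {u, v} \<and> u \<in> cm_vertices L \<and> v \<in> cm_vertices L \<and> u \<noteq> v" if "e \<in> cm_edges L" for e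
    using that by (auto simp: cm_edges_iff)
  show "inj_on label (cm_vertices L)"
    using label_cm_\<sigma> label_zero_imp_fixed radius_eq_imp_orbit abs_label
    by (intro inj_on_odd_labelling[where \<sigma> = cm_\<sigma>]) auto
  show "\<bar>label v\<bar> < pi" for v
    using radius_le_1[of v] pi_ge_two by (simp add: abs_label)
qed (use cm_\<sigma>_in cm_\<sigma>_cm_\<sigma> label_cm_\<sigma> cm_\<sigma>_image_edge antipodal_edge_extreme in auto)

end

lemma special_parts_append_even:
  assumes even: "\<forall>p\<in>set ps. even p" and parts: "special_parts q pa pb za zb pc"
  shows "special_parts (ps @ q) (length ps + pa) (length ps + pb) (length ps + za) (length ps + zb) (length ps + pc)"
proof -
  let ?n = "length ps"
  interpret special_parts q pa pb za zb pc
    by (fact parts)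
  have nth: "(ps @ q) ! (?n + i) = q ! i" for i
    by (simp add: nth_append)
  have shift: "\<exists>m. i = ?n + m \<and> m < length q \<and> odd (q ! m)"
    if "i < length (ps @ q)" "odd ((ps @ q) ! i)" for i
  proof -
    have "\<not> i < ?n"
      using that even by (auto simp: nth_append)
    then show ?thesis
      using that by (intro exI[of _ "i - ?n"]) (auto simp: nth_append)
  qed
  show ?thesis
  proof
    show "i \<in> {?n + pa, ?n + pb, ?n + za, ?n + zb, ?n + pc}"
      if "i < length (ps @ q)" "odd ((ps @ q) ! i)" for i
      using shift[OF that] odd_part by auto
    show "i \<in> {?n + pa, ?n + pb, ?n + za, ?n + zb}"
      if "?n + za < length (ps @ q)" "i < length (ps @ q)" "odd ((ps @ q) ! i)" for i
      using shift[OF that(2,3)] odd_part_inner that(1) by auto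
  qed (use distinct_special outer_pair inner_pair nth in auto)
qed

lemma special_parts_without_pairs:
  assumes "length L \<le> n" and "\<And>i. i < length L \<Longrightarrow> odd (L ! i) \<Longrightarrow> i = pc"
  shows "special_parts L n (n + 1) (n + 2) (n + 3) pc"
  using assms by unfold_locales auto

lemma special_parts_outer_pair:
  assumes "length L \<le> n" "pa < length L" "pb < length L" "pa \<noteq> pb" "L ! pa = 1" "L ! pb = 1"
    and "\<And>i. i < length L \<Longrightarrow> odd (L ! i) \<Longrightarrow> i \<in> {pa, pb, pc}"
  shows "special_parts L pa pb n (n + 1) pc"
  using assms by unfold_locales auto

lemma special_parts_two_pairs:
  assumes "distinct [pa, pb, za, zb]" "pa < length L" "pb < length L" "za < length L" "zb < length L"
    and "L ! pa = 1" "L ! pb = 1" "L ! za = 1" "L ! zb = 1"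
    and "\<And>i. i < length L \<Longrightarrow> odd (L ! i) \<Longrightarrow> i \<in> {pa, pb, za, zb}"
  shows "special_parts L pa pb za zb pa"
  using assms by unfold_locales auto

lemma special_parts_outer_case:
  assumes "{i, j, k, l} = {0, 1, 2, 3}" "length q = 4" "q ! i = 1" "q ! j = 1" "q ! k = 0"
  shows "special_parts q i j 4 5 l"
proof -
  have quarter: "m \<in> {i, j, k, l} \<longleftrightarrow> m < 4" for m
    unfolding assms(1) by auto
  have "card (set [i, j, k, l]) = length [i, j, k, l]"
    using assms(1) by simp
  then have "i \<noteq> j"
    using card_distinct by fastforce
  moreover have "m \<in> {i, j, l}" if "m < length q" "odd (q ! m)" for m
    using quarter[of m] that assms(2,5) by auto
  ultimately show ?thesis
    using special_parts_outer_pair[of q 4 i j l] quarter[of i] quarter[of j] assms(2-4) by simp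
qed

lemma q_condition_special_parts:
  assumes "q_condition q1 q2 q3 q4"
  shows "\<exists>pa pb za zb pc. special_parts [q1, q2, q3, q4] pa pb za zb pc"
proof -
  let ?q = "[q1, q2, q3, q4]"
  from assms consider
      (none) "\<forall>i<4. ?q ! i = 0"
    | (one_odd) i where "i < 4" "odd (?q ! i)" "\<forall>j<4. j \<noteq> i \<longrightarrow> ?q ! j = 0"
    | (outer) i j k l where "{i, j, k, l} = {0, 1, 2, 3}" "?q ! i = 1" "?q ! j = 1" "?q ! k = 0"
    | (all_one) "\<forall>i<4. ?q ! i = 1"
    unfolding q_condition_def Let_def by blast
  then show ?thesis
  proof cases
    case none
    have "special_parts ?q 4 5 6 7 0"
      using special_parts_without_pairs[of ?q 4 0] none by simp
    then show ?thesis
      by blast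
  next
    case one_odd
    have "m = i" if "m < length ?q" "odd (?q ! m)" for m
      using that one_odd(3) by (cases "m = i") simp_all
    then have "special_parts ?q 4 5 6 7 i"
      using special_parts_without_pairs[of ?q 4 i] by simp
    then show ?thesis
      by blast
  next
    case outer
    then have "special_parts ?q i j 4 5 l"
      by (intro special_parts_outer_case) simp_all
    then show ?thesis
      by blast
  next
    case all_one
    have ones: "?q = [1, 1, 1, 1]"
      using all_one[rule_format, of 0] all_one[rule_format, of 1] all_one[rule_format, of 2]
        all_one[rule_format, of 3] by simp
    have "special_parts ?q 0 1 2 3 0"
      unfolding ones by (rule special_parts_two_pairs) auto
    then show ?thesis
      by blast
  qed
qed

theorem theorem2:
  fixes ps :: "nat list" and q1 q2 q3 q4 :: nat
  assumes "\<forall>p \<in> set ps. even p"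
    and "q_condition q1 q2 q3 q4"
  shows "achirally_embeddable (cm_vertices (ps @ [q1, q2, q3, q4]))
                              (cm_edges (ps @ [q1, q2, q3, q4]))"
proof -
  obtain pa pb za zb pc where "special_parts [q1, q2, q3, q4] pa pb za zb pc"
    using q_condition_special_parts[OF assms(2)] by blast
  then interpret special_parts "ps @ [q1, q2, q3, q4]" "length ps + pa" "length ps + pb"
      "length ps + za" "length ps + zb" "length ps + pc"
    by (rule special_parts_append_even[OF assms(1)])
  show ?thesis
    by (rule achirally_embeddable)
qed

end
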